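(* Let $n\geq 2$ and let $A$ be a commutative associative algebra over $\mathbb{C}$ equipped with $n-1$ pairwise commuting derivations $D_1,\ldots,D_{n-1}$. Define the $n$-ary bracket $$W(u_1,\ldots,u_n)=\det\begin{pmatrix} u_1 & \cdots & u_n\\ D_1u_1 & \cdots & D_1u_n\\ \vdots & & \vdots\\ D_{n-1}u_1 & \cdots & D_{n-1}u_n\end{pmatrix}$$ for $u_1,\ldots,u_n\in A$ (the determinant being computed using the commutative associative product of $A$). Then $(A,\cdot,W(\cdot,\ldots,\cdot))$ is a strong transposed Poisson $n$-Lie algebra.
   Context: An $n$-Lie algebra is a vector space $L$ with an $n$-linear skew-symmetric bracket $[\cdot,\ldots,\cdot]$ satisfying $[[x_1,\ldots,x_n],y_2,\ldots,y_n]=\sum_{i=1}^n[x_1,\ldots,x_{i-1},[x_i,y_2,\ldots,y_n],x_{i+1},\ldots,x_n]$ for all $x_i,y_j\in L$. A transposed Poisson $n$-Lie algebra is a triple $(A,\cdot,[\cdot,\ldots,\cdot])$ where $(A,\cdot)$ is a commutative associative algebra, $(A,[\cdot,\ldots,\cdot])$ is an $n$-Lie algebra, and for all $h,a_1,\ldots,a_n\in A$: $n\,h\,[a_1,\ldots,a_n]=\sum_{i=1}^n[a_1,\ldots,h a_i,\ldots,a_n]$ (with $ha_i$ in the $i$-th slot). It is called strong if moreover for all $h,y_1,y_2,x_1,\ldots,x_{n-1}\in A$: $$y_1[hy_2,x_1,\ldots,x_{n-1}]-y_2[hy_1,x_1,\ldots,x_{n-1}]+\sum_{i=1}^{n-1}(-1)^{i-1}hx_i[y_1,y_2,x_1,\ldots,\hat{x}_i,\ldots,x_{n-1}]=0,$$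 where $\hat{x}_i$ means $x_i$ is omitted. *)

theory Defs
  imports Complex_Main "HOL-Combinatorics.Permutations"
begin

text \<open>The algebra A is a type 'a of class comm_ring (commutative, associative,
 not necessarily unital ring) together with a scalar multiplication by complex
 numbers making it a commutative associative algebra over the complex field.
 n-ary brackets take an argument family u :: nat => 'a, slots 0..n-1.\<close>

definition complex_algebra :: "(complex \<Rightarrow> 'a::comm_ring \<Rightarrow> 'a) \<Rightarrow> bool" where
  "complex_algebra sm \<longleftrightarrow>
     (\<forall>a x y. sm a (x + y) = sm a x + sm a y) \<and>
     (\<forall>a b x. sm (a + b) x = sm a x + sm b x) \<and>
     (\<forall>a b x. sm (a * b) x = sm a (sm b x)) \<and>
     (\<forall>x. sm 1 x = x) \<and>
     (\<forall>a x y. sm a (x * y) = sm a x * y)"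

definition is_derivation :: "(complex \<Rightarrow> 'a::comm_ring \<Rightarrow> 'a) \<Rightarrow> ('a \<Rightarrow> 'a) \<Rightarrow> bool" where
  "is_derivation sm D \<longleftrightarrow>
     (\<forall>x y. D (x + y) = D x + D y) \<and>
     (\<forall>a x. D (sm a x) = sm a (D x)) \<and>
     (\<forall>x y. D (x * y) = D x * y + x * D y)"

text \<open>Product of f 0, ..., f (n-1) (n >= 1), without requiring a unit.\<close>
definition lprod :: "nat \<Rightarrow> (nat \<Rightarrow> 'a::comm_ring) \<Rightarrow> 'a" where
  "lprod n f = foldl (\<lambda>acc i. acc * f i) (f 0) [1..<n]"

definition ldet :: "nat \<Rightarrow> (nat \<Rightarrow> nat \<Rightarrow> 'a::comm_ring) \<Rightarrow> 'a" where
  "ldet n M = (\<Sum>p \<in> {p. p permutes {..<n}}.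
      (if evenperm p then lprod n (\<lambda>i. M i (p i)) else - lprod n (\<lambda>i. M i (p i))))"

definition wdet :: "(nat \<Rightarrow> 'a \<Rightarrow> 'a) \<Rightarrow> nat \<Rightarrow> (nat \<Rightarrow> 'a::comm_ring) \<Rightarrow> 'a" where
  "wdet D n u = ldet n (\<lambda>i j. if i = 0 then u j else D i (u j))"

definition args_only :: "nat \<Rightarrow> ((nat \<Rightarrow> 'a) \<Rightarrow> 'a) \<Rightarrow> bool" where
  "args_only n br \<longleftrightarrow> (\<forall>u v. (\<forall>i<n. u i = v i) \<longrightarrow> br u = br v)"

definition n_multilinear :: "(complex \<Rightarrow> 'a::comm_ring \<Rightarrow> 'a) \<Rightarrow> nat \<Rightarrow> ((nat \<Rightarrow> 'a) \<Rightarrow> 'a) \<Rightarrow> bool" where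
  "n_multilinear sm n br \<longleftrightarrow>
     (\<forall>u k a b x y. k < n \<longrightarrow>
        br (u(k := sm a x + sm b y)) = sm a (br (u(k := x))) + sm b (br (u(k := y))))"

definition skew_symmetric :: "nat \<Rightarrow> ((nat \<Rightarrow> 'a::comm_ring) \<Rightarrow> 'a) \<Rightarrow> bool" where
  "skew_symmetric n br \<longleftrightarrow>
     (\<forall>u i j. i < n \<longrightarrow> j < n \<longrightarrow> i \<noteq> j \<longrightarrow> br (u(i := u j, j := u i)) = - br u)"

text \<open>Filippov identity: x uses slots 0..n-1, y uses slots 1..n-1 (y_2..y_n).\<close>
definition filippov :: "nat \<Rightarrow> ((nat \<Rightarrow> 'a::comm_ring) \<Rightarrow> 'a) \<Rightarrow> bool" where
  "filippov n br \<longleftrightarrow>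
     (\<forall>x y. br (y(0 := br x)) = (\<Sum>i<n. br (x(i := br (y(0 := x i))))))"

definition n_Lie :: "(complex \<Rightarrow> 'a::comm_ring \<Rightarrow> 'a) \<Rightarrow> nat \<Rightarrow> ((nat \<Rightarrow> 'a) \<Rightarrow> 'a) \<Rightarrow> bool" where
  "n_Lie sm n br \<longleftrightarrow> args_only n br \<and> n_multilinear sm n br \<and> skew_symmetric n br \<and> filippov n br"

definition transposed_Poisson_n_Lie ::
  "(complex \<Rightarrow> 'a::comm_ring \<Rightarrow> 'a) \<Rightarrow> nat \<Rightarrow> ((nat \<Rightarrow> 'a) \<Rightarrow> 'a) \<Rightarrow> bool" where
  "transposed_Poisson_n_Lie sm n br \<longleftrightarrow>
     complex_algebra sm \<and> n_Lie sm n br \<and>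
     (\<forall>h a. sm (of_nat n) (h * br a) = (\<Sum>i<n. br (a(i := h * a i))))"

text \<open>Strong condition: x uses slots 1..n-1 (x_1..x_{n-1}).
 The bracket [y1, y2, x_1, .., x_i omitted, .., x_{n-1}] puts y1 in slot 0, y2 in slot 1,
 and the remaining x's in slots 2..n-1 in order.\<close>
definition strong_transposed_Poisson_n_Lie ::
  "(complex \<Rightarrow> 'a::comm_ring \<Rightarrow> 'a) \<Rightarrow> nat \<Rightarrow> ((nat \<Rightarrow> 'a) \<Rightarrow> 'a) \<Rightarrow> bool" where
  "strong_transposed_Poisson_n_Lie sm n br \<longleftrightarrow>
     transposed_Poisson_n_Lie sm n br \<and>
     (\<forall>h y1 y2 x.
        y1 * br (x(0 := h * y2)) - y2 * br (x(0 := h * y1))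
        + (\<Sum>i\<in>{1..n-1}. sm ((-1) ^ (i - 1))
             (h * x i * br (\<lambda>k. if k = 0 then y1 else if k = 1 then y2
                                 else if k - 1 < i then x (k - 1) else x k))) = 0)"

end

theory Submission
  imports Defs "Jordan_Normal_Form.Determinant"
begin

(* Adjoining a unit (the ring Z x A with (m, a)(k, b) = (mk, mb + ka + ab)) embeds A as an ideal
   into a unital commutative ring to which the D_i extend by zero on Z, and W commutes with this
   embedding. So every identity can be checked over a unital ring, where W(u) is the determinant of
   (D_i u_j) with D_0 = id and Laplace expansion is available.
   Expanding along column j gives W(.., h v, ..) = h W(.., v, ..) + v sum_{k>=1} D_k(h) C_kj with
   cofactors C_kj; summed over all j with v = u_j, the extra terms are determinants with two equal
   rows, which is the transposed identity. For the Filippov identity write W(y, -) = c + E with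
   c = C_00 and the first order operator E = sum_{l>=1} C_l0 D_l. As the D_k commute,
   E (W x) = sum_j W(.., E x_j, ..) - (sum_{k>=1} D_k C_k0) W x, and a Piola type identity
   sum_{k>=1} D_k C_k0 = -(n-1) C_00 turns W(y, W x) = c W x + E (W x) into
   n c W x + sum_j W(.., E x_j, ..), which is sum_j W(.., W(y, x_j), ..) by the transposed identity.
   The strong condition is the expansion along its first row of the (n+1)-square determinant whose
   first two rows both equal (y1, y2, x_1, ..., x_{n-1}). *)

section \<open>Integer multiples and the unitization\<close>

fun nat_mult :: "nat \<Rightarrow> 'a::ab_group_add \<Rightarrow> 'a" where
  "nat_mult 0 x = 0"
| "nat_mult (Suc k) x = x + nat_mult k x"

lemma nat_mult_add_left: "nat_mult (a + b) x = nat_mult a x + nat_mult b x"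
  by (induction a) (simp_all add: add.assoc)

lemma additive_nat_mult: "additive (nat_mult k)"
  by unfold_locales (induction k, simp_all add: algebra_simps)

lemma (in additive) nat_mult: "f (nat_mult k x) = nat_mult k (f x)"
  by (induction k) (simp_all add: add zero)

lemma nat_mult_mult: "nat_mult (a * b) x = nat_mult a (nat_mult b x)"
  by (induction a) (simp_all add: nat_mult_add_left)

(* Without a unit there is no of_int, so integer multiples are built from nat_mult. *)
definition int_mult :: "int \<Rightarrow> 'a::ab_group_add \<Rightarrow> 'a" where
  "int_mult m x = nat_mult (nat m) x - nat_mult (nat (- m)) x"

lemma int_mult_diff_nat: "int_mult (int a - int b) x = nat_mult a x - nat_mult b x"
proof -
  let ?m = "int a - int b"
  have "nat ?m + b = a + nat (- ?m)" by linarith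
  then have "nat_mult (nat ?m) x + nat_mult b x = nat_mult a x + nat_mult (nat (- ?m)) x"
    by (metis nat_mult_add_left)
  then show ?thesis unfolding int_mult_def by (simp add: algebra_simps)
qed

lemma int_eq_diff_nat: obtains a b where "m = int a - int b"
  by (rule that[of "nat m" "nat (- m)"]) simp

lemma additive_int_mult: "additive (int_mult m)"
  using additive.diff[OF additive_nat_mult]
  by unfold_locales (simp add: int_mult_def additive.add[OF additive_nat_mult] algebra_simps)

lemma int_mult_zero_right [simp]: "int_mult m 0 = 0"
  by (rule additive.zero[OF additive_int_mult])

lemma (in additive) int_mult: "f (int_mult m x) = int_mult m (f x)"
  by (simp add: int_mult_def diff nat_mult)

lemma int_mult_0 [simp]: "int_mult 0 x = 0"
  by (simp add: int_mult_def)

lemma int_mult_1 [simp]: "int_mult 1 x = x"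
  by (simp add: int_mult_def)

lemma int_mult_add_left: "int_mult (m + k) x = int_mult m x + int_mult k x"
proof -
  obtain a b c d where m: "m = int a - int b" and k: "k = int c - int d"
    by (meson int_eq_diff_nat)
  have "m + k = int (a + c) - int (b + d)"
    unfolding m k by simp
  then have "int_mult (m + k) x = nat_mult (a + c) x - nat_mult (b + d) x"
    by (simp only: int_mult_diff_nat)
  also have "\<dots> = int_mult m x + int_mult k x"
    unfolding m k int_mult_diff_nat by (simp add: nat_mult_add_left algebra_simps)
  finally show ?thesis .
qed

lemma int_mult_mult: "int_mult (m * k) x = int_mult m (int_mult k x)"
proof -
  obtain a b c d where m: "m = int a - int b" and k: "k = int c - int d"
    by (meson int_eq_diff_nat)
  have "m * k = int (a * c + b * d) - int (a * d + b * c)"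
    unfolding m k by (simp add: algebra_simps)
  then have "int_mult (m * k) x = nat_mult (a * c + b * d) x - nat_mult (a * d + b * c) x"
    by (simp only: int_mult_diff_nat)
  also have "\<dots> = int_mult m (int_mult k x)"
    unfolding m k int_mult_diff_nat
    by (simp add: nat_mult_add_left nat_mult_mult additive.diff[OF additive_nat_mult])
  finally show ?thesis .
qed

lemma int_mult_commute: "int_mult m (int_mult k x) = int_mult k (int_mult m x)"
  by (metis int_mult_mult mult.commute)

lemma int_mult_mult_left:
  fixes x y :: "'a::ring"
  shows "int_mult m x * y = int_mult m (x * y)"
  by (rule additive.int_mult[of "\<lambda>x. x * y"]) (simp add: additive_def distrib_right)

lemma int_mult_mult_right:
  fixes x y :: "'a::ring"
  shows "x * int_mult m y = int_mult m (x * y)"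
  by (rule additive.int_mult[of "\<lambda>y. x * y"]) (simp add: additive_def distrib_left)

lemma (in Modules.module) scale_of_nat: "of_nat k *s x = nat_mult k x"
  by (induction k) (simp_all add: scale_left_distrib)

lemma (in Modules.module) scale_of_int: "of_int m *s x = int_mult m x"
proof -
  obtain a b where "m = int a - int b"
    by (rule int_eq_diff_nat)
  then show ?thesis
    by (simp add: int_mult_diff_nat scale_left_diff_distrib scale_of_nat)
qed

lemma complex_algebra_module: "complex_algebra sm \<Longrightarrow> Modules.module sm"
  unfolding complex_algebra_def by unfold_locales auto

datatype 'a unitization = Unitization int 'a

instantiation unitization :: (comm_ring) comm_ring_1
begin

fun plus_unitization where
  "Unitization m a + Unitization k b = Unitization (m + k) (a + b)"

fun times_unitization where
  "Unitization m a * Unitization k b = Unitization (m * k) (int_mult m b + int_mult k a + a * b)"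

fun uminus_unitization where
  "- Unitization m a = Unitization (- m) (- a)"

fun minus_unitization where
  "Unitization m a - Unitization k b = Unitization (m - k) (a - b)"

definition "0 = Unitization 0 0"

definition "1 = Unitization 1 0"

instance
proof
  fix x y z :: "'a unitization"
  show "x * y * z = x * (y * z)"
    by (cases x; cases y; cases z)
      (simp add: additive.add[OF additive_int_mult] int_mult_mult int_mult_commute
        int_mult_mult_left int_mult_mult_right algebra_simps)
  show "x * y = y * x"
    by (cases x; cases y) (simp add: algebra_simps)
  show "(x + y) * z = x * z + y * z"
    by (cases x; cases y; cases z)
      (simp add: additive.add[OF additive_int_mult] int_mult_add_left algebra_simps)
  show "x + y + z = x + (y + z)" by (cases x; cases y; cases z) simp
  show "x + y = y + x" by (cases x; cases y) simp
  show "0 + x = x" by (cases x) (simp add: zero_unitization_def)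
  show "- x + x = 0" by (cases x) (simp add: zero_unitization_def)
  show "x - y = x + - y" by (cases x; cases y) simp
  show "1 * x = x" by (cases x) (simp add: one_unitization_def)
  show "(0::'a unitization) \<noteq> 1" by (simp add: zero_unitization_def one_unitization_def)
qed

end

definition to_unitization :: "'a::comm_ring \<Rightarrow> 'a unitization" where
  "to_unitization x = Unitization 0 x"

lemma to_unitization_inject: "to_unitization x = to_unitization y \<longleftrightarrow> x = y"
  by (simp add: to_unitization_def)

lemma to_unitization_add: "to_unitization (x + y) = to_unitization x + to_unitization y"
  by (simp add: to_unitization_def)

lemma to_unitization_mult: "to_unitization (x * y) = to_unitization x * to_unitization y"
  by (simp add: to_unitization_def)

lemma additive_to_unitization: "additive to_unitization"
  by unfold_locales (rule to_unitization_add)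

definition unitization_act :: "'a::comm_ring unitization \<Rightarrow> 'a \<Rightarrow> 'a" where
  "unitization_act c x = (case c of Unitization m a \<Rightarrow> int_mult m x + a * x)"

lemma to_unitization_mult_right: "to_unitization x * c = to_unitization (unitization_act c x)"
  by (cases c) (simp add: to_unitization_def unitization_act_def algebra_simps)

lemma additive_unitization_act: "additive (unitization_act c)"
  by unfold_locales
    (cases c, simp add: unitization_act_def additive.add[OF additive_int_mult] algebra_simps)

lemma unitization_act_commute:
  fixes f :: "'a::comm_ring \<Rightarrow> 'a"
  assumes "additive f" and "\<And>x y. f (x * y) = x * f y"
  shows "f (unitization_act c x) = unitization_act c (f x)"
  by (cases c) (simp add: unitization_act_def additive.add[OF assms(1)]
      additive.int_mult[OF assms(1)] assms(2))

definition lift_derivation :: "('a::comm_ring \<Rightarrow> 'a) \<Rightarrow> 'a unitization \<Rightarrow> 'a unitization" where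
  "lift_derivation d c = (case c of Unitization m a \<Rightarrow> Unitization 0 (d a))"

lemma lift_derivation_to_unitization: "lift_derivation d (to_unitization x) = to_unitization (d x)"
  by (simp add: lift_derivation_def to_unitization_def)

lemma lift_derivation_add:
  assumes "additive d"
  shows "lift_derivation d (x + y) = lift_derivation d x + lift_derivation d y"
  by (cases x; cases y) (simp add: lift_derivation_def additive.add[OF assms])

lemma lift_derivation_mult:
  assumes "additive d" and "\<And>x y. d (x * y) = d x * y + x * d y"
  shows "lift_derivation d (x * y) = lift_derivation d x * y + x * lift_derivation d y"
  by (cases x; cases y)
    (simp add: lift_derivation_def assms additive.add[OF assms(1)] additive.int_mult[OF assms(1)]
      algebra_simps)

lemma of_nat_unitization: "of_nat k = Unitization (int k) 0"
  by (induction k) (simp_all add: zero_unitization_def one_unitization_def)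

lemma of_int_unitization: "of_int m = Unitization m 0"
proof -
  obtain a b where "m = int a - int b"
    by (rule int_eq_diff_nat)
  then show ?thesis by (simp add: of_nat_unitization)
qed

lemma of_int_mult_to_unitization: "of_int m * to_unitization x = to_unitization (int_mult m x)"
  by (simp add: of_int_unitization to_unitization_def)

lemma to_unitization_fun_upd:
  "(\<lambda>j. to_unitization ((u(i := v)) j)) = (\<lambda>j. to_unitization (u j))(i := to_unitization v)"
  by auto

section \<open>Determinants of matrices given as functions\<close>

definition fdet :: "nat \<Rightarrow> (nat \<Rightarrow> nat \<Rightarrow> 'r::comm_ring_1) \<Rightarrow> 'r" where
  "fdet n M = det (mat n n (\<lambda>(i, j). M i j))"

definition fcofactor :: "nat \<Rightarrow> (nat \<Rightarrow> nat \<Rightarrow> 'r::comm_ring_1) \<Rightarrow> nat \<Rightarrow> nat \<Rightarrow> 'r" where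
  "fcofactor n M i j = cofactor (mat n n (\<lambda>(i, j). M i j)) i j"

lemma fdet_cong: "(\<And>i j. i < n \<Longrightarrow> j < n \<Longrightarrow> M i j = N i j) \<Longrightarrow> fdet n M = fdet n N"
  unfolding fdet_def by (rule arg_cong[of _ _ det]) (rule eq_matI, auto)

lemma fdet_row_expansion: "k < n \<Longrightarrow> fdet n M = (\<Sum>j<n. M k j * fcofactor n M k j)"
  unfolding fdet_def fcofactor_def by (subst laplace_expansion_row[of _ n k]) auto

lemma fdet_col_expansion: "l < n \<Longrightarrow> fdet n M = (\<Sum>i<n. M i l * fcofactor n M i l)"
  unfolding fdet_def fcofactor_def by (subst laplace_expansion_column[of _ n l]) auto

lemma fcofactor_cong:
  assumes "k < n" "l < n"
    and "\<And>i j. i < n \<Longrightarrow> j < n \<Longrightarrow> i \<noteq> k \<Longrightarrow> j \<noteq> l \<Longrightarrow> M i j = N i j"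
  shows "fcofactor n M k l = fcofactor n N k l"
proof -
  have "mat_delete (mat n n (\<lambda>(i, j). M i j)) k l = mat_delete (mat n n (\<lambda>(i, j). N i j)) k l"
    unfolding mat_delete_def by (rule eq_matI) (auto intro!: assms(3))
  then show ?thesis unfolding fcofactor_def cofactor_def by simp
qed

lemma fcofactor_minor:
  assumes "i < n" "j < n"
  shows "fcofactor n M i j = (-1) ^ (i + j) *
    fdet (n - 1) (\<lambda>r c. M (if r < i then r else Suc r) (if c < j then c else Suc c))"
proof -
  have "mat_delete (mat n n (\<lambda>(i, j). M i j)) i j
      = mat (n - 1) (n - 1) (\<lambda>(r, c). M (if r < i then r else Suc r) (if c < j then c else Suc c))"
    unfolding mat_delete_def by (rule eq_matI) auto
  then show ?thesis unfolding fcofactor_def cofactor_def fdet_def by simp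
qed

lemma fdet_update_row:
  assumes "k < n"
  shows "fdet n (M(k := v)) = (\<Sum>j<n. v j * fcofactor n M k j)"
proof -
  have "fcofactor n (M(k := v)) k j = fcofactor n M k j" if "j < n" for j
    using assms that by (intro fcofactor_cong) auto
  then show ?thesis
    unfolding fdet_row_expansion[OF assms, of "M(k := v)"] by (intro sum.cong) auto
qed

lemma fdet_update_col:
  assumes "l < n"
  shows "fdet n (\<lambda>i. (M i)(l := v i)) = (\<Sum>i<n. v i * fcofactor n M i l)"
proof -
  have "fcofactor n (\<lambda>i. (M i)(l := v i)) i l = fcofactor n M i l" if "i < n" for i
    using assms that by (intro fcofactor_cong) auto
  then show ?thesis
    unfolding fdet_col_expansion[OF assms, of "\<lambda>i. (M i)(l := v i)"] by (intro sum.cong) auto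
qed

lemma fdet_identical_rows:
  assumes "k < n" "r < n" "k \<noteq> r" "\<And>j. j < n \<Longrightarrow> M k j = M r j"
  shows "fdet n M = 0"
  unfolding fdet_def using assms
  by (intro det_identical_rows[of _ n k r]) (auto intro!: eq_vecI simp: row_def)

lemma fdet_swap_rows:
  assumes "k < n" "r < n" "k \<noteq> r"
  shows "fdet n (M(k := M r, r := M k)) = - fdet n M"
proof -
  have "mat n n (\<lambda>(i, j). (M(k := M r, r := M k)) i j) = swaprows k r (mat n n (\<lambda>(i, j). M i j))"
    by (rule eq_matI) (use assms in auto)
  then show ?thesis unfolding fdet_def using assms by (simp only:) (rule det_swaprows, auto)
qed

lemma fdet_transpose: "fdet n (\<lambda>i j. M j i) = fdet n M"
proof -
  have "mat n n (\<lambda>(i, j). M j i) = transpose_mat (mat n n (\<lambda>(i, j). M i j))"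
    by (rule eq_matI) auto
  then show ?thesis unfolding fdet_def by (simp only:) (rule det_transpose, auto)
qed

lemma fdet_single_entry_col:
  assumes "l < n" "k < n" "\<And>i. i < n \<Longrightarrow> i \<noteq> k \<Longrightarrow> A i l = 0"
  shows "fdet n A = A k l * fcofactor n A k l"
proof -
  have "fdet n A = (\<Sum>i<n. A i l * fcofactor n A i l)" by (rule fdet_col_expansion[OF assms(1)])
  also have "\<dots> = A k l * fcofactor n A k l"
    using assms(2,3) by (subst sum.remove[of _ k]) (auto intro!: sum.neutral)
  finally show ?thesis .
qed

lemma fdet_zero_col:
  assumes "l < n" "\<And>i. i < n \<Longrightarrow> A i l = 0"
  shows "fdet n A = 0"
  using fdet_col_expansion[OF assms(1), of A] assms(2) by simp

lemma fcofactor_eq_fdet_unit_col: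
  assumes "k < n" "l < n"
  shows "fcofactor n M k l = fdet n (\<lambda>i. (M i)(l := if i = k then 1 else 0))"
proof -
  have "fdet n (\<lambda>i. (M i)(l := if i = k then 1 else 0))
      = (\<Sum>i<n. (if i = k then 1 else 0) * fcofactor n M i l)"
    by (rule fdet_update_col[OF assms(2)])
  also have "\<dots> = (\<Sum>i<n. if i = k then fcofactor n M k l else 0)"
    by (intro sum.cong) auto
  also have "\<dots> = fcofactor n M k l"
    using assms(1) by simp
  finally show ?thesis by simp
qed

lemma fdet_unit_col_cong:
  assumes "k < n" "l < n"
    and "\<And>i. i < n \<Longrightarrow> A i l = (if i = k then 1 else 0)"
    and "\<And>i. i < n \<Longrightarrow> B i l = (if i = k then 1 else 0)"
    and "\<And>i j. i < n \<Longrightarrow> j < n \<Longrightarrow> i \<noteq> k \<Longrightarrow> j \<noteq> l \<Longrightarrow> A i j = B i j"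
  shows "fdet n A = fdet n B"
proof -
  have "fdet n A = fcofactor n A k l"
    using fdet_single_entry_col[of l n k A] assms(1-3) by simp
  also have "\<dots> = fcofactor n B k l"
    by (rule fcofactor_cong[OF assms(1,2,5)])
  also have "\<dots> = fdet n B"
    using fdet_single_entry_col[of l n k B] assms(1,2,4) by simp
  finally show ?thesis .
qed

lemma fdet_leibniz:
  "fdet n M = (\<Sum>p | p permutes {0..<n}. signof p * (\<Prod>i=0..<n. M i (p i)))"
  unfolding fdet_def
  by (subst det_def'[of _ n]) (auto intro!: sum.cong prod.cong simp: permutes_in_image)

locale derivation = additive d for d :: "'r::comm_ring_1 \<Rightarrow> 'r" +
  assumes leibniz: "d (x * y) = d x * y + x * d y"
begin

lemma one: "d 1 = 0"
  using leibniz[of 1 1] by simp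

lemma prod:
  fixes f :: "nat \<Rightarrow> 'r"
  shows "d (\<Prod>i=0..<n. f i) = (\<Sum>k<n. \<Prod>i=0..<n. (f(k := d (f k))) i)"
proof (induction n)
  case (Suc n)
  have "(\<Prod>i=0..<n. (f(n := v)) i) = (\<Prod>i=0..<n. f i)" for v
    by (rule prod.cong) auto
  then show ?case by (simp add: leibniz Suc.IH sum_distrib_right)
qed (simp add: one)

lemma signof_mult: "d (signof p * x) = signof p * d x"
  by (simp add: leibniz sign_def minus one)

lemma fdet: "d (fdet n M) = (\<Sum>k<n. fdet n (M(k := \<lambda>j. d (M k j))))"
proof -
  have "d (fdet n M)
      = (\<Sum>p | p permutes {0..<n}. \<Sum>k<n. signof p * (\<Prod>i=0..<n. (M(k := \<lambda>j. d (M k j))) i (p i)))"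
    unfolding fdet_leibniz sum signof_mult prod sum_distrib_left
    by (intro sum.cong refl arg_cong[where f = "\<lambda>x. _ * x"] prod.cong) auto
  also have "\<dots> = (\<Sum>k<n. fdet n (M(k := \<lambda>j. d (M k j))))"
    unfolding fdet_leibniz by (rule sum.swap)
  finally show ?thesis .
qed

lemma fdet_cofactors: "d (fdet n M) = (\<Sum>k<n. \<Sum>j<n. d (M k j) * fcofactor n M k j)"
  by (simp add: fdet fdet_update_row)

end

section \<open>The bracket over a unital ring\<close>

lemma lprod_Suc: "0 < n \<Longrightarrow> lprod (Suc n) f = lprod n f * f n"
  unfolding lprod_def by simp

(* lprod 0 f = f 0, so ldet 0 M is not the empty determinant. *)
lemma lprod_eq_prod:
  fixes f :: "nat \<Rightarrow> 'r::comm_ring_1"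
  assumes "0 < n"
  shows "lprod n f = (\<Prod>i=0..<n. f i)"
  using assms
proof (induction n rule: nat_induct_non_zero)
  case 1
  then show ?case by (simp add: lprod_def)
next
  case (Suc n)
  then show ?case by (simp add: lprod_Suc)
qed

lemma ldet_eq_fdet: "0 < n \<Longrightarrow> ldet n M = fdet n M"
  unfolding ldet_def fdet_leibniz lessThan_atLeast0
  by (intro sum.cong) (simp_all add: lprod_eq_prod sign_def)

lemma to_unitization_foldl:
  "to_unitization (foldl (\<lambda>acc i. acc * f i) a xs)
    = foldl (\<lambda>acc i. acc * to_unitization (f i)) (to_unitization a) xs"
  by (induction xs arbitrary: a) (simp_all add: to_unitization_mult)

lemma to_unitization_ldet: "to_unitization (ldet n M) = ldet n (\<lambda>i j. to_unitization (M i j))"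
  unfolding ldet_def lprod_def additive.sum[OF additive_to_unitization]
  by (intro sum.cong refl) (simp add: to_unitization_foldl additive.minus[OF additive_to_unitization])

definition ext_deriv :: "(nat \<Rightarrow> 'a \<Rightarrow> 'a) \<Rightarrow> nat \<Rightarrow> 'a \<Rightarrow> 'a" where
  "ext_deriv D i v = (if i = 0 then v else D i v)"

definition wronski_matrix :: "(nat \<Rightarrow> 'a \<Rightarrow> 'a) \<Rightarrow> (nat \<Rightarrow> 'a) \<Rightarrow> nat \<Rightarrow> nat \<Rightarrow> 'a" where
  "wronski_matrix D u i j = ext_deriv D i (u j)"

lemma wdet_eq_ldet: "wdet D n u = ldet n (wronski_matrix D u)"
  unfolding wdet_def wronski_matrix_def ext_deriv_def ..

lemma wronski_matrix_update:
  "wronski_matrix D (u(j := v)) = (\<lambda>i. (wronski_matrix D u i)(j := ext_deriv D i v))"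
  by (auto simp: fun_eq_iff wronski_matrix_def)

lemma sum_lessThan_split_0: "0 < (n::nat) \<Longrightarrow> (\<Sum>k<n. f k) = f 0 + (\<Sum>k\<in>{1..<n}. f k)"
  by (simp add: lessThan_atLeast0 sum.atLeast_Suc_lessThan)

lemma sum_antisymmetric_eq_0:
  fixes g :: "'a \<Rightarrow> 'a \<Rightarrow> 'b::ab_group_add"
  assumes "finite S"
    and "\<And>k r. k \<in> S \<Longrightarrow> r \<in> S \<Longrightarrow> g r k = - g k r"
    and "\<And>k. k \<in> S \<Longrightarrow> g k k = 0"
  shows "(\<Sum>k\<in>S. \<Sum>r\<in>S. g k r) = 0"
  using assms
proof (induction S rule: finite_induct)
  case (insert a S)
  have "(\<Sum>k\<in>S. g k a) = (\<Sum>r\<in>S. - g a r)"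
    by (intro sum.cong refl insert.prems(1)) auto
  then have "(\<Sum>k\<in>S. g k a) = - (\<Sum>r\<in>S. g a r)"
    by (simp add: sum_negf)
  moreover have "(\<Sum>k\<in>S. \<Sum>r\<in>S. g k r) = 0"
    by (intro insert.IH insert.prems) auto
  ultimately show ?case
    using insert.hyps insert.prems(2) by (simp add: sum.distrib)
qed simp

definition args_omitting :: "'a \<Rightarrow> 'a \<Rightarrow> (nat \<Rightarrow> 'a) \<Rightarrow> nat \<Rightarrow> nat \<Rightarrow> 'a" where
  "args_omitting y1 y2 x i k =
    (if k = 0 then y1 else if k = 1 then y2 else if k - 1 < i then x (k - 1) else x k)"

lemma to_unitization_args_omitting:
  "(\<lambda>k. to_unitization (args_omitting y1 y2 x i k))
    = args_omitting (to_unitization y1) (to_unitization y2) (\<lambda>j. to_unitization (x j)) i"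
  by (auto simp: fun_eq_iff args_omitting_def)

locale commuting_derivations =
  fixes n :: nat and D :: "nat \<Rightarrow> 'r::comm_ring_1 \<Rightarrow> 'r"
  assumes n_pos: "0 < n"
    and derivation_D: "\<And>k. 1 \<le> k \<Longrightarrow> k < n \<Longrightarrow> derivation (D k)"
    and D_commute: "\<And>k l x. 1 \<le> k \<Longrightarrow> k < n \<Longrightarrow> 1 \<le> l \<Longrightarrow> l < n \<Longrightarrow> D k (D l x) = D l (D k x)"
begin

abbreviation W :: "(nat \<Rightarrow> 'r) \<Rightarrow> 'r" where
  "W \<equiv> wdet D n"

abbreviation cof :: "(nat \<Rightarrow> 'r) \<Rightarrow> nat \<Rightarrow> nat \<Rightarrow> 'r" where
  "cof u \<equiv> fcofactor n (wronski_matrix D u)"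

lemma W_eq_fdet: "W u = fdet n (wronski_matrix D u)"
  by (simp add: wdet_eq_ldet ldet_eq_fdet n_pos)

lemma ext_deriv_add: "k < n \<Longrightarrow> ext_deriv D k (x + y) = ext_deriv D k x + ext_deriv D k y"
  using derivation_D[of k] by (simp add: ext_deriv_def additive.add[OF derivation.axioms(1)])

lemma ext_deriv_mult:
  "k < n \<Longrightarrow> ext_deriv D k (h * v) = h * ext_deriv D k v + (if k = 0 then 0 else v * D k h)"
  using derivation_D[of k] by (simp add: ext_deriv_def derivation.leibniz algebra_simps)

lemma W_update_col:
  "j < n \<Longrightarrow> W (u(j := v)) = (\<Sum>k<n. ext_deriv D k v * cof u k j)"
  by (simp add: W_eq_fdet wronski_matrix_update fdet_update_col)

lemma W_add_col: "j < n \<Longrightarrow> W (u(j := x + y)) = W (u(j := x)) + W (u(j := y))"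
  by (simp add: W_update_col ext_deriv_add sum.distrib algebra_simps)

lemma W_mult_col:
  assumes "j < n"
  shows "W (u(j := h * v)) = h * W (u(j := v)) + v * (\<Sum>k\<in>{1..<n}. D k h * cof u k j)"
proof -
  have "W (u(j := h * v)) = (\<Sum>k<n. h * (ext_deriv D k v * cof u k j)
      + (if k = 0 then 0 else v * (D k h * cof u k j)))"
    unfolding W_update_col[OF assms] by (intro sum.cong refl) (simp add: ext_deriv_mult algebra_simps)
  also have "\<dots> = h * W (u(j := v)) + (\<Sum>k\<in>{1..<n}. v * (D k h * cof u k j))"
    by (simp add: sum.distrib W_update_col[OF assms] sum_distrib_left distrib_left
        sum_lessThan_split_0[OF n_pos])
  finally show ?thesis by (simp only: sum_distrib_left)
qed

lemma W_row_replace: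
  assumes "k < n" "l < n"
  shows "(\<Sum>j<n. wronski_matrix D u l j * cof u k j) = (if l = k then W u else 0)"
proof -
  have "(\<Sum>j<n. wronski_matrix D u l j * cof u k j) = fdet n ((wronski_matrix D u)(k := wronski_matrix D u l))"
    by (rule fdet_update_row[OF assms(1), symmetric])
  also have "\<dots> = (if l = k then W u else 0)"
  proof (cases "l = k")
    case False
    then show ?thesis using assms by (simp add: fdet_identical_rows[of k n l])
  qed (simp add: W_eq_fdet)
  finally show ?thesis .
qed

lemma W_transposed: "(\<Sum>i<n. W (u(i := h * u i))) = of_nat n * h * W u"
proof -
  have "(\<Sum>i<n. W (u(i := h * u i)))
      = (\<Sum>i<n. h * W u) + (\<Sum>i<n. u i * (\<Sum>k\<in>{1..<n}. D k h * cof u k i))"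
    by (simp add: W_mult_col sum.distrib)
  also have "(\<Sum>i<n. h * W u) = of_nat n * h * W u"
    by (simp add: mult.assoc)
  also have "(\<Sum>i<n. u i * (\<Sum>k\<in>{1..<n}. D k h * cof u k i))
      = (\<Sum>k\<in>{1..<n}. D k h * (\<Sum>i<n. wronski_matrix D u 0 i * cof u k i))"
    by (simp add: sum_distrib_left sum.swap[of _ "{..<n}"] wronski_matrix_def ext_deriv_def
        mult.left_commute)
  also have "\<dots> = 0"
    using n_pos by (intro sum.neutral) (simp add: W_row_replace)
  finally show ?thesis by (simp only: add_0_right)
qed

definition bracket_coeff :: "(nat \<Rightarrow> 'r) \<Rightarrow> nat \<Rightarrow> 'r" where
  "bracket_coeff y k = cof y k 0"

definition diff_op :: "(nat \<Rightarrow> 'r) \<Rightarrow> 'r \<Rightarrow> 'r" where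
  "diff_op c z = (\<Sum>l\<in>{1..<n}. c l * D l z)"

lemma W_update_first: "W (y(0 := z)) = bracket_coeff y 0 * z + diff_op (bracket_coeff y) z"
proof -
  have "W (y(0 := z)) = (\<Sum>k<n. ext_deriv D k z * cof y k 0)"
    by (rule W_update_col[OF n_pos])
  also have "\<dots> = ext_deriv D 0 z * cof y 0 0 + (\<Sum>k\<in>{1..<n}. ext_deriv D k z * cof y k 0)"
    by (rule sum_lessThan_split_0[OF n_pos])
  also have "ext_deriv D 0 z * cof y 0 0 = bracket_coeff y 0 * z"
    by (simp add: ext_deriv_def bracket_coeff_def)
  also have "(\<Sum>k\<in>{1..<n}. ext_deriv D k z * cof y k 0) = diff_op (bracket_coeff y) z"
    unfolding diff_op_def bracket_coeff_def by (intro sum.cong) (auto simp: ext_deriv_def)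
  finally show ?thesis .
qed

lemma diff_op_D:
  assumes "1 \<le> k" "k < n"
  shows "diff_op c (D k v) = D k (diff_op c v) - (\<Sum>l\<in>{1..<n}. D k (c l) * D l v)"
proof -
  interpret derivation "D k" by (rule derivation_D[OF assms])
  have "D k (diff_op c v) = (\<Sum>l\<in>{1..<n}. D k (c l) * D l v + c l * D l (D k v))"
    unfolding diff_op_def sum using assms by (intro sum.cong) (simp_all add: leibniz D_commute)
  then show ?thesis by (simp add: sum.distrib diff_op_def)
qed

lemma diff_op_fdet:
  "diff_op c (fdet n M) = (\<Sum>k<n. \<Sum>j<n. diff_op c (M k j) * fcofactor n M k j)"
proof -
  have "diff_op c (fdet n M) = (\<Sum>l\<in>{1..<n}. \<Sum>k<n. \<Sum>j<n. c l * D l (M k j) * fcofactor n M k j)"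
    unfolding diff_op_def
    by (intro sum.cong refl) (simp add: derivation.fdet_cofactors[OF derivation_D] sum_distrib_left
        mult.assoc)
  also have "\<dots> = (\<Sum>k<n. \<Sum>l\<in>{1..<n}. \<Sum>j<n. c l * D l (M k j) * fcofactor n M k j)"
    by (rule sum.swap)
  also have "\<dots> = (\<Sum>k<n. \<Sum>j<n. \<Sum>l\<in>{1..<n}. c l * D l (M k j) * fcofactor n M k j)"
    by (intro sum.cong refl sum.swap)
  also have "\<dots> = (\<Sum>k<n. \<Sum>j<n. diff_op c (M k j) * fcofactor n M k j)"
    by (simp add: diff_op_def sum_distrib_right)
  finally show ?thesis .
qed

lemma diff_op_ext_deriv:
  assumes "k < n"
  shows "diff_op c (ext_deriv D k v) = ext_deriv D k (diff_op c v)
    - (if k = 0 then 0 else (\<Sum>l\<in>{1..<n}. D k (c l) * ext_deriv D l v))"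
proof (cases "k = 0")
  case False
  have "(\<Sum>l\<in>{1..<n}. D k (c l) * ext_deriv D l v) = (\<Sum>l\<in>{1..<n}. D k (c l) * D l v)"
    by (intro sum.cong) (auto simp: ext_deriv_def)
  then show ?thesis using False assms by (simp add: ext_deriv_def diff_op_D)
qed (simp add: ext_deriv_def)

lemma diff_op_W:
  "diff_op c (W x) = (\<Sum>j<n. W (x(j := diff_op c (x j)))) - (\<Sum>k\<in>{1..<n}. D k (c k)) * W x"
proof -
  let ?M = "wronski_matrix D x"
  let ?corr = "\<lambda>k j. (\<Sum>l\<in>{1..<n}. D k (c l) * ?M l j) * cof x k j"
  have "diff_op c (W x) = (\<Sum>k<n. \<Sum>j<n. ext_deriv D k (diff_op c (x j)) * cof x k j
      - (if k = 0 then 0 else ?corr k j))"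
    unfolding W_eq_fdet diff_op_fdet
    by (intro sum.cong refl) (simp add: wronski_matrix_def diff_op_ext_deriv left_diff_distrib)
  also have "\<dots> = (\<Sum>k<n. \<Sum>j<n. ext_deriv D k (diff_op c (x j)) * cof x k j)
      - (\<Sum>k\<in>{1..<n}. \<Sum>j<n. ?corr k j)"
    by (simp add: sum_subtractf sum_lessThan_split_0[OF n_pos, of "\<lambda>k. \<Sum>j<n. if k = 0 then 0 else _ k j"])
  also have "(\<Sum>k<n. \<Sum>j<n. ext_deriv D k (diff_op c (x j)) * cof x k j)
      = (\<Sum>j<n. W (x(j := diff_op c (x j))))"
    by (subst sum.swap) (simp add: W_update_col)
  also have "(\<Sum>k\<in>{1..<n}. \<Sum>j<n. ?corr k j)
      = (\<Sum>k\<in>{1..<n}. \<Sum>l\<in>{1..<n}. D k (c l) * (\<Sum>j<n. ?M l j * cof x k j))"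
    by (simp add: sum_distrib_left sum_distrib_right sum.swap[of _ "{..<n}"] mult.assoc)
  also have "\<dots> = (\<Sum>k\<in>{1..<n}. D k (c k) * W x)"
    by (intro sum.cong refl) (simp add: W_row_replace if_distrib[of "\<lambda>x. _ * x"] cong: if_cong)
  finally show ?thesis by (simp only: sum_distrib_right)
qed

(* Row r of the matrix with determinant C_k0 (the Wronski matrix of y with column 0 replaced by
   the k-th unit vector), differentiated by D_k; row k is replaced by the unit row, which does not
   change the determinant when r and k differ. *)
definition piola_matrix :: "(nat \<Rightarrow> 'r) \<Rightarrow> nat \<Rightarrow> nat \<Rightarrow> nat \<Rightarrow> nat \<Rightarrow> 'r" where
  "piola_matrix y k r i j =
     (if i = r then (if j = 0 then 0 else D k (ext_deriv D r (y j)))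
      else if i = k then (if j = 0 then 1 else 0)
      else (if j = 0 then 0 else ext_deriv D i (y j)))"

lemma D_bracket_coeff:
  assumes "1 \<le> k" "k < n"
  shows "D k (bracket_coeff y k) = (\<Sum>r<n. fdet n (piola_matrix y k r))"
proof -
  interpret derivation "D k" by (rule derivation_D[OF assms])
  define Y where "Y = (\<lambda>i. (wronski_matrix D y i)(0 := if i = k then 1 else 0))"
  have "bracket_coeff y k = fdet n Y"
    unfolding bracket_coeff_def Y_def by (rule fcofactor_eq_fdet_unit_col[OF assms(2) n_pos])
  then have "D k (bracket_coeff y k) = (\<Sum>r<n. fdet n (Y(r := \<lambda>j. D k (Y r j))))"
    by (simp add: fdet)
  also have "\<dots> = (\<Sum>r<n. fdet n (piola_matrix y k r))"
  proof (intro sum.cong refl)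
    fix r assume "r \<in> {..<n}"
    show "fdet n (Y(r := \<lambda>j. D k (Y r j))) = fdet n (piola_matrix y k r)"
    proof (cases "r = k")
      case True
      then show ?thesis
        using n_pos by (simp add: fdet_zero_col[of 0] Y_def piola_matrix_def zero one)
    next
      case False
      then show ?thesis
        using n_pos assms
        by (intro fdet_unit_col_cong[of k n 0])
          (auto simp: Y_def piola_matrix_def wronski_matrix_def zero)
    qed
  qed
  finally show ?thesis .
qed

lemma fdet_piola_matrix_diag: "fdet n (piola_matrix y k k) = 0"
  using n_pos by (intro fdet_zero_col[of 0]) (simp_all add: piola_matrix_def)

lemma fdet_piola_matrix_swap:
  assumes "1 \<le> k" "k < n" "1 \<le> r" "r < n"
  shows "fdet n (piola_matrix y r k) = - fdet n (piola_matrix y k r)"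
proof (cases "k = r")
  case False
  have "piola_matrix y r k = (piola_matrix y k r)(k := piola_matrix y k r r, r := piola_matrix y k r k)"
    using assms False by (auto simp: fun_eq_iff piola_matrix_def ext_deriv_def D_commute)
  then show ?thesis using fdet_swap_rows[of k n r] assms False by simp
qed (simp add: fdet_piola_matrix_diag)

lemma fdet_piola_matrix_0:
  assumes "1 \<le> k" "k < n"
  shows "fdet n (piola_matrix y k 0) = - bracket_coeff y 0"
proof -
  let ?P = "piola_matrix y k 0"
  have "fdet n (?P(k := ?P 0, 0 := ?P k)) = fcofactor n (?P(k := ?P 0, 0 := ?P k)) 0 0"
    using fdet_single_entry_col[of 0 n 0 "?P(k := ?P 0, 0 := ?P k)"] assms
    by (simp add: piola_matrix_def)
  also have "\<dots> = bracket_coeff y 0"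
    unfolding bracket_coeff_def using assms n_pos
    by (intro fcofactor_cong) (auto simp: piola_matrix_def wronski_matrix_def ext_deriv_def)
  finally have "- fdet n ?P = bracket_coeff y 0"
    using fdet_swap_rows[of k n 0 ?P] assms by simp
  then show ?thesis by (metis minus_minus)
qed

lemma sum_D_bracket_coeff:
  "(\<Sum>k\<in>{1..<n}. D k (bracket_coeff y k)) = - (of_nat (n - 1) * bracket_coeff y 0)"
proof -
  let ?g = "\<lambda>k r. fdet n (piola_matrix y k r)"
  have "(\<Sum>k\<in>{1..<n}. D k (bracket_coeff y k))
      = (\<Sum>k\<in>{1..<n}. - bracket_coeff y 0 + (\<Sum>r\<in>{1..<n}. ?g k r))"
    by (intro sum.cong refl)
      (simp add: D_bracket_coeff sum_lessThan_split_0[OF n_pos] fdet_piola_matrix_0)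
  also have "\<dots> = - (of_nat (n - 1) * bracket_coeff y 0) + (\<Sum>k\<in>{1..<n}. \<Sum>r\<in>{1..<n}. ?g k r)"
    by (simp only: sum.distrib sum_constant card_atLeastLessThan mult_minus_right)
  also have "(\<Sum>k\<in>{1..<n}. \<Sum>r\<in>{1..<n}. ?g k r) = 0"
    by (rule sum_antisymmetric_eq_0) (auto intro: fdet_piola_matrix_swap fdet_piola_matrix_diag)
  finally show ?thesis by simp
qed

lemma W_filippov: "W (y(0 := W x)) = (\<Sum>i<n. W (x(i := W (y(0 := x i)))))"
proof -
  let ?c = "bracket_coeff y"
  have "(\<Sum>i<n. W (x(i := W (y(0 := x i)))))
      = (\<Sum>i<n. W (x(i := ?c 0 * x i)) + W (x(i := diff_op ?c (x i))))"
    by (intro sum.cong refl) (simp add: W_update_first W_add_col)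
  also have "\<dots> = of_nat n * ?c 0 * W x + (\<Sum>i<n. W (x(i := diff_op ?c (x i))))"
    by (simp add: sum.distrib W_transposed)
  finally have rhs: "(\<Sum>i<n. W (x(i := W (y(0 := x i))))) = \<dots>" .
  have "(of_nat n :: 'r) = 1 + of_nat (n - 1)"
    using n_pos by (simp add: of_nat_diff)
  then show ?thesis
    unfolding rhs W_update_first[of y "W x"] diff_op_W sum_D_bracket_coeff by (simp add: algebra_simps)
qed

lemma W_swap:
  assumes "i < n" "j < n" "i \<noteq> j"
  shows "W (u(i := u j, j := u i)) = - W u"
proof -
  let ?T = "\<lambda>a b. wronski_matrix D u b a"
  have "W (u(i := u j, j := u i)) = fdet n (\<lambda>a b. wronski_matrix D (u(i := u j, j := u i)) b a)"
    unfolding W_eq_fdet by (rule fdet_transpose[symmetric])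
  also have "(\<lambda>a b. wronski_matrix D (u(i := u j, j := u i)) b a) = ?T(i := ?T j, j := ?T i)"
    by (auto simp: fun_eq_iff wronski_matrix_def)
  also have "fdet n (?T(i := ?T j, j := ?T i)) = - fdet n ?T"
    by (rule fdet_swap_rows[OF assms])
  also have "fdet n ?T = W u"
    unfolding W_eq_fdet by (rule fdet_transpose)
  finally show ?thesis .
qed

lemma W_alternating_sum:
  "(\<Sum>c<Suc n. (-1) ^ c * V c * W (\<lambda>c'. V (if c' < c then c' else Suc c'))) = 0"
proof -
  define B where "B = (\<lambda>r c. if r = 0 then V c else wronski_matrix D V (r - 1) c)"
  have "fcofactor (Suc n) B 0 c = (-1) ^ c * W (\<lambda>c'. V (if c' < c then c' else Suc c'))"
    if "c < Suc n" for c
    using that by (simp add: fcofactor_minor W_eq_fdet B_def wronski_matrix_def[abs_def])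
  then have "(\<Sum>c<Suc n. (-1) ^ c * V c * W (\<lambda>c'. V (if c' < c then c' else Suc c')))
      = (\<Sum>c<Suc n. B 0 c * fcofactor (Suc n) B 0 c)"
    by (intro sum.cong refl) (simp add: B_def mult_ac)
  also have "\<dots> = fdet (Suc n) B"
    by (rule fdet_row_expansion[symmetric]) simp
  also have "\<dots> = 0"
    using n_pos by (intro fdet_identical_rows[of 0 _ 1]) (auto simp: B_def wronski_matrix_def ext_deriv_def)
  finally show ?thesis .
qed

lemma W_strong_unweighted:
  "y1 * W (x(0 := y2)) - y2 * W (x(0 := y1))
   + (\<Sum>i\<in>{1..n-1}. (-1) ^ (i - 1) * (x i * W (args_omitting y1 y2 x i))) = 0"
proof -
  define V where "V = (\<lambda>c. if c = 0 then y1 else if c = 1 then y2 else x (c - 1))"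
  define f where "f = (\<lambda>c. (-1) ^ c * V c * W (\<lambda>c'. V (if c' < c then c' else Suc c')))"
  have skip_0: "(\<lambda>c'. V (if c' < 0 then c' else Suc c')) = x(0 := y2)"
    by (auto simp: V_def fun_eq_iff)
  have skip_1: "(\<lambda>c'. V (if c' < 1 then c' else Suc c')) = x(0 := y1)"
    by (auto simp: V_def fun_eq_iff)
  have f_0: "f 0 = y1 * W (x(0 := y2))"
    unfolding f_def skip_0 by (simp add: V_def)
  have f_1: "f 1 = - (y2 * W (x(0 := y1)))"
    unfolding f_def skip_1 by (simp add: V_def)
  have f_Suc: "(\<Sum>i\<in>{1..<n}. f (Suc i))
      = (\<Sum>i\<in>{1..n-1}. (-1) ^ (i - 1) * (x i * W (args_omitting y1 y2 x i)))"
  proof (intro sum.cong)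
    fix i assume i: "i \<in> {1..n-1}"
    have "(\<lambda>c'. V (if c' < Suc i then c' else Suc c')) = args_omitting y1 y2 x i"
      using i by (auto simp: V_def args_omitting_def fun_eq_iff)
    moreover have "(-1) ^ Suc i = ((-1) ^ (i - 1) :: 'r)"
      using i by (cases i) auto
    ultimately show "f (Suc i) = (-1) ^ (i - 1) * (x i * W (args_omitting y1 y2 x i))"
      unfolding f_def using i by (simp only:) (simp add: V_def)
  qed (use n_pos in auto)
  have "y1 * W (x(0 := y2)) - y2 * W (x(0 := y1))
      + (\<Sum>i\<in>{1..n-1}. (-1) ^ (i - 1) * (x i * W (args_omitting y1 y2 x i)))
      = f 0 + (f 1 + (\<Sum>i\<in>{1..<n}. f (Suc i)))"
    unfolding f_0 f_1 f_Suc by simp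
  also have "\<dots> = (\<Sum>c<Suc n. f c)"
    unfolding sum.lessThan_Suc_shift sum_lessThan_split_0[OF n_pos, of "\<lambda>i. f (Suc i)"] by simp
  also have "\<dots> = 0"
    unfolding f_def by (rule W_alternating_sum)
  finally show ?thesis .
qed

lemma W_strong:
  "y1 * W (x(0 := h * y2)) - y2 * W (x(0 := h * y1))
   + (\<Sum>i\<in>{1..n-1}. (-1) ^ (i - 1) * (h * x i * W (args_omitting y1 y2 x i))) = 0"
proof -
  have "y1 * W (x(0 := h * y2)) - y2 * W (x(0 := h * y1))
      = h * (y1 * W (x(0 := y2)) - y2 * W (x(0 := y1)))"
    by (simp add: W_mult_col[OF n_pos] algebra_simps)
  moreover have "(\<Sum>i\<in>{1..n-1}. (-1) ^ (i - 1) * (h * x i * W (args_omitting y1 y2 x i)))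
      = h * (\<Sum>i\<in>{1..n-1}. (-1) ^ (i - 1) * (x i * W (args_omitting y1 y2 x i)))"
    unfolding sum_distrib_left by (intro sum.cong refl) (simp add: mult_ac)
  ultimately show ?thesis
    by (simp only: distrib_left[symmetric] W_strong_unweighted mult_zero_right)
qed

end

section \<open>The bracket over a non-unital algebra\<close>

locale complex_commuting_derivations =
  fixes sm :: "complex \<Rightarrow> 'a::comm_ring \<Rightarrow> 'a"
    and D :: "nat \<Rightarrow> 'a \<Rightarrow> 'a"
    and n :: nat
  assumes n_pos: "0 < n"
    and algebra: "complex_algebra sm"
    and D_derivation: "\<forall>i\<in>{1..n-1}. is_derivation sm (D i)"
    and D_commute: "\<forall>i\<in>{1..n-1}. \<forall>j\<in>{1..n-1}. \<forall>x. D i (D j x) = D j (D i x)"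
begin

interpretation Modules.module sm
  by (rule complex_algebra_module[OF algebra])

lemma D_additive: "1 \<le> k \<Longrightarrow> k < n \<Longrightarrow> additive (D k)"
  using D_derivation by unfold_locales (auto simp: is_derivation_def)

lemma D_leibniz: "1 \<le> k \<Longrightarrow> k < n \<Longrightarrow> D k (x * y) = D k x * y + x * D k y"
  using D_derivation by (auto simp: is_derivation_def)

lemma D_scale: "1 \<le> k \<Longrightarrow> k < n \<Longrightarrow> D k (sm a x) = sm a (D k x)"
  using D_derivation by (auto simp: is_derivation_def)

lemma sm_mult_right: "sm a (x * y) = x * sm a y"
  using algebra by (metis complex_algebra_def mult.commute)

lemma derivation_lift_derivation:
  assumes "1 \<le> k" "k < n"
  shows "derivation (lift_derivation (D k))"
proof
  show "lift_derivation (D k) (x + y) = lift_derivation (D k) x + lift_derivation (D k) y" for x y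
    by (rule lift_derivation_add[OF D_additive[OF assms]])
  show "lift_derivation (D k) (x * y) = lift_derivation (D k) x * y + x * lift_derivation (D k) y" for x y
    by (rule lift_derivation_mult[OF D_additive[OF assms] D_leibniz[OF assms]])
qed

sublocale lifted: commuting_derivations n "\<lambda>k. lift_derivation (D k)"
proof (intro commuting_derivations.intro n_pos derivation_lift_derivation)
  fix k l x assume "1 \<le> k" "k < n" "1 \<le> l" "l < n"
  then show "lift_derivation (D k) (lift_derivation (D l) x) = lift_derivation (D l) (lift_derivation (D k) x)"
    using D_commute by (cases x) (simp add: lift_derivation_def)
qed

lemma to_unitization_ext_deriv:
  "to_unitization (ext_deriv D k v) = ext_deriv (\<lambda>k. lift_derivation (D k)) k (to_unitization v)"
  by (simp add: ext_deriv_def lift_derivation_to_unitization)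

lemma to_unitization_wdet:
  "to_unitization (wdet D n u) = lifted.W (\<lambda>j. to_unitization (u j))"
  unfolding wdet_eq_ldet to_unitization_ldet
  by (simp add: wronski_matrix_def[abs_def] to_unitization_ext_deriv)

lemma to_unitization_sm_of_int: "to_unitization (sm (of_int m) x) = of_int m * to_unitization x"
  by (simp add: scale_of_int of_int_mult_to_unitization)

lemma wdet_eq_iff:
  "wdet D n u = wdet D n v \<longleftrightarrow> lifted.W (\<lambda>j. to_unitization (u j)) = lifted.W (\<lambda>j. to_unitization (v j))"
  by (simp add: to_unitization_wdet[symmetric] to_unitization_inject)

lemma wdet_update_col:
  assumes "j < n"
  shows "wdet D n (u(j := v))
    = (\<Sum>k<n. unitization_act (lifted.cof (\<lambda>j. to_unitization (u j)) k j) (ext_deriv D k v))"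
proof -
  have "to_unitization (wdet D n (u(j := v)))
      = (\<Sum>k<n. to_unitization (ext_deriv D k v) * lifted.cof (\<lambda>j. to_unitization (u j)) k j)"
    unfolding to_unitization_wdet to_unitization_fun_upd
    by (simp add: lifted.W_update_col[OF assms] to_unitization_ext_deriv)
  then show ?thesis
    by (simp add: to_unitization_mult_right additive.sum[OF additive_to_unitization, symmetric]
        to_unitization_inject)
qed

lemma ext_deriv_linear:
  "k < n \<Longrightarrow> ext_deriv D k (sm a x + sm b y) = sm a (ext_deriv D k x) + sm b (ext_deriv D k y)"
  by (auto simp: ext_deriv_def additive.add[OF D_additive] D_scale)

lemma unitization_act_scale: "unitization_act c (sm a x) = sm a (unitization_act c x)"
proof (rule unitization_act_commute[symmetric])
  show "additive (sm a)"
    by unfold_locales (rule scale_right_distrib)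
qed (rule sm_mult_right)

lemma wdet_multilinear: "n_multilinear sm n (wdet D n)"
  unfolding n_multilinear_def
proof (intro allI impI)
  fix u k a b x y assume k: "k < n"
  show "wdet D n (u(k := sm a x + sm b y)) = sm a (wdet D n (u(k := x))) + sm b (wdet D n (u(k := y)))"
    unfolding wdet_update_col[OF k]
    by (simp add: ext_deriv_linear additive.add[OF additive_unitization_act] unitization_act_scale
        scale_sum_right sum.distrib)
qed

lemma wdet_args_only: "args_only n (wdet D n)"
  unfolding args_only_def wdet_eq_iff lifted.W_eq_fdet
  by (auto simp: wronski_matrix_def intro!: fdet_cong)

lemma wdet_skew_symmetric: "skew_symmetric n (wdet D n)"
  unfolding skew_symmetric_def
proof (intro allI impI)
  fix u :: "nat \<Rightarrow> 'a" and i j assume "i < n" "j < n" "i \<noteq> j"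
  then have "to_unitization (wdet D n (u(i := u j, j := u i))) = to_unitization (- wdet D n u)"
    unfolding to_unitization_wdet to_unitization_fun_upd
    by (simp add: lifted.W_swap[of i j "\<lambda>j. to_unitization (u j)"] to_unitization_wdet
        additive.minus[OF additive_to_unitization])
  then show "wdet D n (u(i := u j, j := u i)) = - wdet D n u"
    by (simp add: to_unitization_inject)
qed

lemma wdet_filippov: "filippov n (wdet D n)"
  unfolding filippov_def
proof (intro allI)
  fix x y :: "nat \<Rightarrow> 'a"
  have "to_unitization (wdet D n (y(0 := wdet D n x)))
      = to_unitization (\<Sum>i<n. wdet D n (x(i := wdet D n (y(0 := x i)))))"
    unfolding to_unitization_wdet to_unitization_fun_upd additive.sum[OF additive_to_unitization]
    by (simp add: lifted.W_filippov to_unitization_fun_upd)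
  then show "wdet D n (y(0 := wdet D n x)) = (\<Sum>i<n. wdet D n (x(i := wdet D n (y(0 := x i)))))"
    by (simp add: to_unitization_inject)
qed

lemma wdet_transposed: "sm (of_nat n) (h * wdet D n a) = (\<Sum>i<n. wdet D n (a(i := h * a i)))"
proof -
  have "to_unitization (sm (of_int (int n)) (h * wdet D n a))
      = to_unitization (\<Sum>i<n. wdet D n (a(i := h * a i)))"
    unfolding to_unitization_sm_of_int to_unitization_mult to_unitization_wdet
      to_unitization_fun_upd additive.sum[OF additive_to_unitization]
    by (simp add: lifted.W_transposed to_unitization_mult mult.assoc)
  then show ?thesis
    by (simp add: to_unitization_inject)
qed

lemma to_unitization_sm_minus_one_power:
  "to_unitization (sm ((-1) ^ k) z) = (-1) ^ k * to_unitization z"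
  using to_unitization_sm_of_int[of "(-1) ^ k" z] by simp

lemma wdet_strong:
  "y1 * wdet D n (x(0 := h * y2)) - y2 * wdet D n (x(0 := h * y1))
   + (\<Sum>i\<in>{1..n-1}. sm ((-1) ^ (i - 1)) (h * x i * wdet D n (args_omitting y1 y2 x i))) = 0"
    (is "?lhs = 0")
proof -
  let ?x = "\<lambda>j. to_unitization (x j)"
  have "to_unitization ?lhs = to_unitization y1 * lifted.W (?x(0 := to_unitization h * to_unitization y2))
      - to_unitization y2 * lifted.W (?x(0 := to_unitization h * to_unitization y1))
      + (\<Sum>i\<in>{1..n-1}. (-1) ^ (i - 1) * (to_unitization h * ?x i
          * lifted.W (args_omitting (to_unitization y1) (to_unitization y2) ?x i)))"
    unfolding additive.add[OF additive_to_unitization] additive.diff[OF additive_to_unitization]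
      additive.sum[OF additive_to_unitization] to_unitization_sm_minus_one_power
      to_unitization_mult to_unitization_wdet to_unitization_fun_upd to_unitization_args_omitting ..
  also have "\<dots> = 0"
    by (rule lifted.W_strong)
  finally show ?thesis
    by (simp add: to_unitization_inject additive.zero[OF additive_to_unitization, symmetric])
qed

lemma strong_transposed_Poisson_wdet: "strong_transposed_Poisson_n_Lie sm n (wdet D n)"
  unfolding strong_transposed_Poisson_n_Lie_def transposed_Poisson_n_Lie_def n_Lie_def
  using algebra wdet_args_only wdet_multilinear wdet_skew_symmetric wdet_filippov
    wdet_transposed wdet_strong[unfolded args_omitting_def[abs_def]] by blast

end

theorem mainTheorem2:
  fixes sm :: "complex \<Rightarrow> 'a::comm_ring \<Rightarrow> 'a"
    and D :: "nat \<Rightarrow> 'a \<Rightarrow> 'a"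
    and n :: nat
  assumes "n \<ge> 2"
    and "complex_algebra sm"
    and "\<forall>i\<in>{1..n-1}. is_derivation sm (D i)"
    and "\<forall>i\<in>{1..n-1}. \<forall>j\<in>{1..n-1}. \<forall>x. D i (D j x) = D j (D i x)"
  shows "strong_transposed_Poisson_n_Lie sm n (wdet D n)"
proof -
  interpret complex_commuting_derivations sm D n
    using assms by unfold_locales auto
  show ?thesis
    by (rule strong_transposed_Poisson_wdet)
qed

end
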